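(* Let $S$ be a sticky tree with $n+1$ nodes ($n\ge1$), let $v_1,\dots,v_n$ be its non-root nodes listed in prefix order, and let $c$ be its certificate-counting function. Let $\mathrm{E}(S)$ be the contour word of $S$ and $\mathrm{D}(S)=u\,d^{c(v_1)}\,u\,d^{c(v_2)}\cdots u\,d^{c(v_n)}$. Then $\mathrm{D}(S)$ and $\mathrm{E}(S)$ are Dyck paths of length $2n$ and $\mathrm{D}(S)\preceq_T \mathrm{E}(S)$, i.e. $[\mathrm{D}(S),\mathrm{E}(S)]$ is an interval of the Tamari lattice of order $n$.
   Context: Sticky trees: a plane tree is a rooted tree in which the children of every node are linearly ordered (left to right). The root has depth $0$, a child of a node of depth $d$ has depth $d+1$. The prefix order is: the root, followed by the prefix order of the subtree of its leftmost child, then of its second child, and so on. $S_u$ denotes the subtree rooted at $u$. A sticky tree is a plane tree $S$ with node set $V$ and a labeling $\ell:V\to\mathbb{N}$ such that: (1) every node $u$ of depth $d$ has $0\le\ell(u)\le d$; (2) every node $u$ of depth $d>0$ has some $v\in S_u$ (possibly $v=u$) with $\ell(v)<d$; (3) for every node $u$ of depth $d$, if some $v\in S_u$ has $\ell(v)=d$, then every node of $S_u$ (including $u$) preceding $v$ in prefix order has label at least $d$. The certificate of a non-root node $u$ of depth $d$ is the first node, in prefix order, of $S_u$ whose label is $<d$. The certificate-counting function $c:V\to\mathbb{N}$ assigns to each node $w$ the number of non-root nodes whose certificate is $w$. Contour word: $\mathrm{E}(S)$ is the word in $\{u,d\}$ obtained by the depth-first traversal of $S$ starting at the root and visiting children from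 left to right, writing $u$ each time one moves from a node to a child and $d$ each time one moves back from a child to its parent. Dyck paths and Tamari lattice: a Dyck path of length $2n$ is a word in $\{u,d\}$ with $n$ letters $u$ and $n$ letters $d$ such that every prefix has at least as many $u$'s as $d$'s. The $i$-th letter $u$ (call it $u_i$) of a Dyck path $D$ is matched with the letter $d$ following it such that the factor $D_i$ strictly between them is itself a Dyck path (balanced); $\ell_D(i)$ denotes the length of $D_i$. For Dyck paths $D,E$ of length $2n$, $D\preceq_T E$ iff $\ell_D(i)\le \ell_E(i)$ for all $1\le i\le n$; this is the Tamari lattice of order $n$, and a pair $[D,E]$ with $D\preceq_T E$ is a Tamari interval. *)

theory Defs
  imports Main
begin

text \<open>Nodes are addressed by paths from the root: the root is [], and the k-th child
  (0-based) of the node with address p has address p @ [k].\<close>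

datatype ptree = PNode "ptree list"

fun pre :: "ptree \<Rightarrow> nat list list"
  and pre_children :: "nat \<Rightarrow> ptree list \<Rightarrow> nat list list" where
  "pre (PNode ts) = [] # pre_children 0 ts"
| "pre_children k [] = []"
| "pre_children k (s # ss) = map (Cons k) (pre s) @ pre_children (Suc k) ss"

definition nodes :: "ptree \<Rightarrow> nat list set" where
  "nodes t = set (pre t)"

definition depth :: "nat list \<Rightarrow> nat" where
  "depth p = length p"

definition subtree_nodes :: "ptree \<Rightarrow> nat list \<Rightarrow> nat list set" where
  "subtree_nodes t u = {v \<in> nodes t. \<exists>w. v = u @ w}"

definition precedes :: "ptree \<Rightarrow> nat list \<Rightarrow> nat list \<Rightarrow> bool" where
  "precedes t w v \<longleftrightarrow> (\<exists>i j. i < j \<and> j < length (pre t) \<and> pre t ! i = w \<and> pre t ! j = v)"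

definition sticky :: "ptree \<Rightarrow> (nat list \<Rightarrow> nat) \<Rightarrow> bool" where
  "sticky t l \<longleftrightarrow>
     (\<forall>u\<in>nodes t. l u \<le> depth u) \<and>
     (\<forall>u\<in>nodes t. depth u > 0 \<longrightarrow> (\<exists>v\<in>subtree_nodes t u. l v < depth u)) \<and>
     (\<forall>u\<in>nodes t. \<forall>v\<in>subtree_nodes t u. l v = depth u \<longrightarrow>
         (\<forall>w\<in>subtree_nodes t u. precedes t w v \<longrightarrow> l w \<ge> depth u))"

definition certificate :: "ptree \<Rightarrow> (nat list \<Rightarrow> nat) \<Rightarrow> nat list \<Rightarrow> nat list" where
  "certificate t l u = hd (filter (\<lambda>v. v \<in> subtree_nodes t u \<and> l v < depth u) (pre t))"

definition cert_count :: "ptree \<Rightarrow> (nat list \<Rightarrow> nat) \<Rightarrow> nat list \<Rightarrow> nat" where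
  "cert_count t l w = card {u \<in> nodes t. u \<noteq> [] \<and> certificate t l u = w}"

datatype step = U | D

fun contour :: "ptree \<Rightarrow> step list" where
  "contour (PNode ts) = concat (map (\<lambda>s. U # contour s @ [D]) ts)"

definition dword :: "ptree \<Rightarrow> (nat list \<Rightarrow> nat) \<Rightarrow> step list" where
  "dword t l = concat (map (\<lambda>v. U # replicate (cert_count t l v) D) (tl (pre t)))"

definition cnt :: "step \<Rightarrow> step list \<Rightarrow> nat" where
  "cnt a w = length (filter (\<lambda>x. x = a) w)"

definition dyck :: "nat \<Rightarrow> step list \<Rightarrow> bool" where
  "dyck n w \<longleftrightarrow> cnt U w = n \<and> cnt D w = n \<and>
     (\<forall>k \<le> length w. cnt D (take k w) \<le> cnt U (take k w))"

text \<open>Position (0-based) of the i-th letter u (i \<ge> 1).\<close>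
definition upos :: "step list \<Rightarrow> nat \<Rightarrow> nat" where
  "upos w i = filter (\<lambda>p. w ! p = U) [0..<length w] ! (i - 1)"

text \<open>ell_D(i): length of the factor strictly between u_i and its matching d,
  i.e. of the (first) factor following u_i that is a Dyck path and is followed by d.\<close>
definition ell :: "step list \<Rightarrow> nat \<Rightarrow> nat" where
  "ell w i = (LEAST m. upos w i + m + 1 < length w \<and> w ! (upos w i + m + 1) = D \<and>
                (\<exists>k. dyck k (take m (drop (upos w i + 1) w))))"

definition tamari_le :: "nat \<Rightarrow> step list \<Rightarrow> step list \<Rightarrow> bool" where
  "tamari_le n P Q \<longleftrightarrow> (\<forall>i\<in>{1..n}. ell P i \<le> ell Q i)"

end

theory Submission
  imports Defs
begin

text \<open>Number the nodes 0, ..., n in prefix order and let s_i be the size of the subtree of node i.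
  That subtree occupies exactly the positions i, ..., i + s_i - 1, and in the contour word the
  i-th u is matched after a factor of length 2(s_i - 1). The certificate of node k lies in its
  subtree, so its position c(k) satisfies k \<le> c(k) < k + s_k; and D(S) consists of the blocks
  u d^{#c^{-1}(j)}, j = 1, ..., n. Hence the first m blocks contain at most m letters d, which
  makes D(S) a Dyck path. Since subtrees are nested, the certificates of the nodes i, ..., e
  (e = i + s_i - 1) all lie among them, so the blocks i, ..., e contain more than e - i letters d
  and the i-th u of D(S) is matched inside them: ell_D(i) \<le> 2(e - i) = ell_E(i).\<close>

section \<open>Balanced words and matching letters\<close>


lemma cnt_Nil [simp]: "cnt a [] = 0"
  by (simp add: cnt_def)

lemma cnt_Cons [simp]: "cnt a (x # xs) = (if x = a then 1 else 0) + cnt a xs"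
  by (simp add: cnt_def)

lemma cnt_append [simp]: "cnt a (xs @ ys) = cnt a xs + cnt a ys"
  by (simp add: cnt_def)

lemma cnt_replicate [simp]: "cnt a (replicate k b) = (if a = b then k else 0)"
  by (simp add: cnt_def)

lemma cnt_concat: "cnt a (concat xss) = (\<Sum>xs\<leftarrow>xss. cnt a xs)"
  by (induction xss) auto

lemma cnt_U_plus_cnt_D: "cnt U w + cnt D w = length w"
proof (induction w)
  case (Cons a w)
  then show ?case by (cases a) auto
qed simp

lemma cnt_U_filter_positions: "length (filter (\<lambda>q. w ! q = U) [0..<length w]) = cnt U w"
proof -
  have "length (filter (\<lambda>q. w ! q = U) [0..<length w])
      = length (filter (\<lambda>x. x = U) (map (nth w) [0..<length w]))"
    by (simp add: filter_map o_def)
  then show ?thesis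
    by (simp add: map_nth cnt_def)
qed

lemma cnt_take_mono: "m \<le> T \<Longrightarrow> cnt a (take m x) \<le> cnt a (take T x)"
proof -
  assume "m \<le> T"
  then have "take T x = take m x @ drop m (take T x)"
    by (metis append_take_drop_id min.absorb1 take_take)
  then show ?thesis
    by (metis cnt_append le_add1)
qed

definition balanced :: "step list \<Rightarrow> bool" where
  "balanced w \<longleftrightarrow>
     cnt U w = cnt D w \<and> (\<forall>k\<le>length w. cnt D (take k w) \<le> cnt U (take k w))"

lemma dyck_iff_balanced: "dyck n w \<longleftrightarrow> balanced w \<and> cnt U w = n"
  by (auto simp: dyck_def balanced_def)

lemma balanced_Nil [simp]: "balanced []"
  by (simp add: balanced_def)

lemma balanced_append:
  assumes "balanced a" and "balanced b"
  shows "balanced (a @ b)"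
  unfolding balanced_def
proof (intro conjI allI impI)
  fix k assume "k \<le> length (a @ b)"
  then show "cnt D (take k (a @ b)) \<le> cnt U (take k (a @ b))"
    using assms by (cases "k \<le> length a") (auto simp: balanced_def)
qed (use assms in \<open>simp add: balanced_def\<close>)

lemma balanced_concat: "\<forall>w\<in>set ws. balanced w \<Longrightarrow> balanced (concat ws)"
  by (induction ws) (auto simp: balanced_append)

lemma balanced_enclose:
  assumes "balanced w"
  shows "balanced (U # w @ [D])"
  unfolding balanced_def
proof (intro conjI allI impI)
  fix k assume k: "k \<le> length (U # w @ [D])"
  show "cnt D (take k (U # w @ [D])) \<le> cnt U (take k (U # w @ [D]))"
  proof (cases k)
    case (Suc k')
    then show ?thesis
      using assms k by (cases "k' \<le> length w") (auto simp: balanced_def)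
  qed simp
qed (use assms in \<open>simp add: balanced_def\<close>)

lemma upos_append:
  assumes "cnt U a + 1 = i"
  shows "upos (a @ U # b) i = length a"
proof -
  let ?w = "a @ U # b"
  have "[0..<length ?w] = [0..<length a] @ length a # [Suc (length a)..<length ?w]"
    using upt_add_eq_append[of 0 "length a" "Suc (length b)"]
      upt_conv_Cons[of "length a" "length a + Suc (length b)"] by simp
  moreover have "filter (\<lambda>q. ?w ! q = U) [0..<length a] = filter (\<lambda>q. a ! q = U) [0..<length a]"
    by (rule filter_cong) (auto simp: nth_append)
  ultimately have "filter (\<lambda>q. ?w ! q = U) [0..<length ?w]
      = filter (\<lambda>q. a ! q = U) [0..<length a] @
        length a # filter (\<lambda>q. ?w ! q = U) [Suc (length a)..<length ?w]"
    by simp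
  moreover have "i - 1 = length (filter (\<lambda>q. a ! q = U) [0..<length a])"
    using assms by (simp add: cnt_U_filter_positions)
  ultimately show ?thesis
    unfolding upos_def by (simp add: nth_append_length)
qed

lemma not_balanced_take_past_D:
  assumes "balanced (take m x)" and "x ! m = D" and "m < m'" and "m' \<le> length x"
  shows "\<not> balanced (take m' x)"
proof
  assume "balanced (take m' x)"
  then have "cnt D (take (Suc m) (take m' x)) \<le> cnt U (take (Suc m) (take m' x))"
    using assms(3,4) unfolding balanced_def by simp
  moreover have "take (Suc m) (take m' x) = take m x @ [D]"
    using assms(2-4) by (simp add: min_def take_Suc_conv_app_nth)
  ultimately show False
    using assms(1) by (simp add: balanced_def)
qed

lemma ell_eqI:
  assumes up: "upos w i = p" and len: "p + m + 1 < length w" and D: "w ! (p + m + 1) = D"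
    and bal: "balanced (take m (drop (p + 1) w))"
  shows "ell w i = m"
proof -
  let ?x = "drop (p + 1) w"
  let ?C = "\<lambda>m. upos w i + m + 1 < length w \<and> w ! (upos w i + m + 1) = D \<and>
                (\<exists>k. dyck k (take m (drop (upos w i + 1) w)))"
  have xD: "?x ! m' = D" if "w ! (p + m' + 1) = D" "p + m' + 1 < length w" for m'
    using that by (simp add: add.commute add.left_commute)
  have C: "?C m"
    using up len D bal by (simp add: dyck_iff_balanced)
  have "m' = m" if "?C m'" for m'
  proof -
    have m': "p + m' + 1 < length w" "?x ! m' = D" "balanced (take m' ?x)"
      using that up xD by (auto simp: dyck_iff_balanced)
    show ?thesis
    proof (rule linorder_cases[of m' m])
      assume "m' < m"
      then show ?thesis
        using not_balanced_take_past_D[OF m'(3,2), of m] len bal by simp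
    next
      assume "m < m'"
      then show ?thesis
        using not_balanced_take_past_D[OF bal xD[OF D len], of m'] m'(1,3) by simp
    qed
  qed
  then show ?thesis
    unfolding ell_def by (intro Least_equality[where P = ?C, OF C]) auto
qed

lemma first_excess_prefix:
  assumes "T \<le> length x" and "cnt U (take T x) < cnt D (take T x)"
  obtains m where "m < T" and "balanced (take m x)" and "x ! m = D"
proof -
  \<comment> \<open>the shortest prefix with more d's than u's is a balanced word followed by a d\<close>
  define P where "P t \<longleftrightarrow> cnt U (take t x) < cnt D (take t x)" for t
  define t0 where "t0 = (LEAST t. P t)"
  have "P T"
    using assms(2) by (simp add: P_def)
  then have Pt0: "P t0" and t0T: "t0 \<le> T"
    unfolding t0_def by (rule LeastI, rule Least_le)
  have before: "\<not> P t" if "t < t0" for t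
    using that unfolding t0_def by (rule not_less_Least)
  obtain m where m: "t0 = Suc m"
    using Pt0 by (cases t0) (auto simp: P_def)
  have mlen: "m < length x"
    using t0T assms(1) m by simp
  have tk: "take t0 x = take m x @ [x ! m]"
    using mlen m by (simp add: take_Suc_conv_app_nth)
  have nm: "cnt D (take m x) \<le> cnt U (take m x)"
    using before[of m] m by (simp add: P_def)
  have xm: "x ! m = D"
    using Pt0 tk nm by (cases "x ! m") (auto simp: P_def)
  have "balanced (take m x)"
    unfolding balanced_def
  proof (intro conjI allI impI)
    show "cnt U (take m x) = cnt D (take m x)"
      using Pt0 tk nm xm by (simp add: P_def)
  next
    fix j assume "j \<le> length (take m x)"
    then show "cnt D (take j (take m x)) \<le> cnt U (take j (take m x))"
      using before[of j] m mlen by (auto simp: P_def min_def)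
  qed
  moreover have "m < T"
    using m t0T by simp
  ultimately show ?thesis
    using that xm by blast
qed

lemma ell_le_first_excess:
  assumes up: "upos w i = p" and T: "T \<le> length (drop (p + 1) w)"
    and excess: "cnt U (take T (drop (p + 1) w)) < cnt D (take T (drop (p + 1) w))"
  shows "ell w i \<le> 2 * cnt U (take T (drop (p + 1) w))"
proof -
  let ?x = "drop (p + 1) w"
  obtain m where m: "m < T" and bal: "balanced (take m ?x)" and D: "?x ! m = D"
    using first_excess_prefix[OF T excess] .
  have "ell w i = m"
    using m T D by (intro ell_eqI[OF up _ _ bal]) (simp_all add: add.commute add.left_commute)
  also have "m = 2 * cnt U (take m ?x)"
    using bal cnt_U_plus_cnt_D[of "take m ?x"] m T by (simp add: balanced_def)
  also have "\<dots> \<le> 2 * cnt U (take T ?x)"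
    using m by (simp add: cnt_take_mono)
  finally show ?thesis .
qed

section \<open>Prefix order and contour of plane trees\<close>

fun subtree_at :: "ptree \<Rightarrow> nat list \<Rightarrow> ptree" where
  "subtree_at t [] = t"
| "subtree_at (PNode ts) (k # p) = subtree_at (ts ! k) p"

lemma set_pre_children:
  "set (pre_children k ts) = {(k + j) # q | j q. j < length ts \<and> q \<in> set (pre (ts ! j))}"
proof (induction ts arbitrary: k)
  case (Cons s ss)
  show ?case
  proof (rule set_eqI, rule iffI)
    fix x assume "x \<in> set (pre_children k (s # ss))"
    then show "x \<in> {(k + j) # q | j q. j < length (s # ss) \<and> q \<in> set (pre ((s # ss) ! j))}"
      using Cons.IH[of "Suc k"] by force
  next
    fix x assume "x \<in> {(k + j) # q | j q. j < length (s # ss) \<and> q \<in> set (pre ((s # ss) ! j))}"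
    then obtain j q where x: "x = (k + j) # q" "j < Suc (length ss)" "q \<in> set (pre ((s # ss) ! j))"
      by auto
    then show "x \<in> set (pre_children k (s # ss))"
      using Cons.IH[of "Suc k"] by (cases j) auto
  qed
qed simp

lemma Cons_mem_pre_iff [simp]:
  "k # q \<in> set (pre (PNode ts)) \<longleftrightarrow> k < length ts \<and> q \<in> set (pre (ts ! k))"
  by (auto simp: set_pre_children)

lemma pre_nth_0 [simp]: "pre t ! 0 = []"
  by (cases t) simp

lemma pre_not_Nil [simp]: "pre t \<noteq> []"
  by (cases t) simp

lemma distinct_pre: "distinct (pre t)"
proof (induction t)
  case (PNode ts)
  have "distinct (pre_children k ts)" if "\<forall>s\<in>set ts. distinct (pre s)" for k
    using that
  proof (induction ts arbitrary: k)
    case (Cons s ss)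
    then show ?case
      by (auto simp: distinct_map set_pre_children)
  qed simp
  then show ?case
    using PNode by (auto simp: set_pre_children)
qed

lemma length_pre_children: "length (pre_children k ts) = (\<Sum>s\<leftarrow>ts. length (pre s))"
  by (induction ts arbitrary: k) auto

lemma length_pre: "length (pre t) = Suc (cnt U (contour t))"
proof (induction t)
  case (PNode ts)
  then show ?case
    by (simp add: length_pre_children cnt_concat o_def cong: map_cong)
qed

lemma balanced_contour: "balanced (contour t)"
proof (induction t)
  case (PNode ts)
  then show ?case
    by (auto intro!: balanced_concat balanced_enclose)
qed

lemma pre_children_split:
  "k < length ts \<Longrightarrow> pre_children j ts =
     pre_children j (take k ts) @ map (Cons (j + k)) (pre (ts ! k)) @ pre_children (j + k + 1) (drop (k + 1) ts)"
proof (induction ts arbitrary: j k)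
  case (Cons s ss)
  then show ?case
    by (cases k) (simp_all add: Cons.IH[of _ "Suc j"])
qed simp

lemma contour_split:
  assumes "k < length ts"
  shows "contour (PNode ts) =
    contour (PNode (take k ts)) @ U # contour (ts ! k) @ D # contour (PNode (drop (k + 1) ts))"
proof -
  have "ts = take k ts @ ts ! k # drop (Suc k) ts"
    using assms by (simp add: id_take_nth_drop)
  then have "contour (PNode ts) = contour (PNode (take k ts @ ts ! k # drop (Suc k) ts))"
    by (rule arg_cong)
  then show ?thesis
    by simp
qed

lemma append_mem_pre_iff:
  "p \<in> set (pre t) \<Longrightarrow> p @ w \<in> set (pre t) \<longleftrightarrow> w \<in> set (pre (subtree_at t p))"
proof (induction p arbitrary: t)
  case (Cons k p)
  then show ?case
    by (cases t) (simp del: pre.simps)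
qed simp

lemma pre_decomp:
  assumes "p \<in> set (pre t)"
  shows "\<exists>xs ys. pre t = xs @ map ((@) p) (pre (subtree_at t p)) @ ys \<and>
    (p \<noteq> [] \<longrightarrow>
      (\<exists>a b. contour t = a @ U # contour (subtree_at t p) @ D # b \<and> cnt U a + 1 = length xs))"
  using assms
proof (induction p arbitrary: t)
  case Nil
  show ?case
    by (rule exI[of _ "[]"], rule exI[of _ "[]"]) simp
next
  case (Cons k p)
  obtain ts where t: "t = PNode ts"
    by (cases t)
  have k: "k < length ts" and p: "p \<in> set (pre (ts ! k))"
    using Cons.prems t by (auto simp del: pre.simps)
  obtain xs ys where xs: "pre (ts ! k) = xs @ map ((@) p) (pre (subtree_at (ts ! k) p)) @ ys"
    and c: "p \<noteq> [] \<longrightarrow> (\<exists>a b. contour (ts ! k) = a @ U # contour (subtree_at (ts ! k) p) @ D # b \<and>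
                              cnt U a + 1 = length xs)"
    using Cons.IH[OF p] by blast
  define A where "A = contour (PNode (take k ts))"
  define B where "B = contour (PNode (drop (k + 1) ts))"
  define xs' where "xs' = [] # pre_children 0 (take k ts) @ map (Cons k) xs"
  have "pre t = xs' @ map ((@) (k # p)) (pre (subtree_at t (k # p))) @
      map (Cons k) ys @ pre_children (k + 1) (drop (k + 1) ts)"
    using pre_children_split[OF k, of 0] by (simp add: t xs'_def xs)
  moreover have "\<exists>a b. contour t = a @ U # contour (subtree_at t (k # p)) @ D # b \<and> cnt U a + 1 = length xs'"
  proof (cases "p = []")
    case True
    then have "xs = []"
      using arg_cong[OF xs, of length] by simp
    then show ?thesis
      using True contour_split[OF k] length_pre[of "PNode (take k ts)"]
      by (intro exI[of _ A] exI[of _ B]) (simp add: t xs'_def A_def B_def)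
  next
    case False
    then obtain a b where "contour (ts ! k) = a @ U # contour (subtree_at (ts ! k) p) @ D # b"
      and "cnt U a + 1 = length xs"
      using c by blast
    then show ?thesis
      using contour_split[OF k] length_pre[of "PNode (take k ts)"]
      by (intro exI[of _ "A @ U # a"] exI[of _ "b @ D # B"]) (simp add: t xs'_def A_def B_def)
  qed
  ultimately show ?case
    by blast
qed

definition subtree_size :: "ptree \<Rightarrow> nat \<Rightarrow> nat" where
  "subtree_size t i = length (pre (subtree_at t (pre t ! i)))"

lemma subtree_size_pos: "0 < subtree_size t i"
  by (simp add: subtree_size_def)

lemma pre_split_nth:
  assumes i: "i < length (pre t)"
  obtains xs ys where "pre t = xs @ map ((@) (pre t ! i)) (pre (subtree_at t (pre t ! i))) @ ys"
    and "length xs = i"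
    and "i \<noteq> 0 \<Longrightarrow>
      \<exists>a b. contour t = a @ U # contour (subtree_at t (pre t ! i)) @ D # b \<and> cnt U a + 1 = i"
proof -
  let ?p = "pre t ! i"
  have p0: "?p = [] \<longleftrightarrow> i = 0"
    using nth_eq_iff_index_eq[OF distinct_pre i, of 0] by auto
  obtain xs ys where dec: "pre t = xs @ map ((@) ?p) (pre (subtree_at t ?p)) @ ys"
    and con: "?p \<noteq> [] \<longrightarrow>
      (\<exists>a b. contour t = a @ U # contour (subtree_at t ?p) @ D # b \<and> cnt U a + 1 = length xs)"
    using pre_decomp[of ?p t] i by auto
  have "pre t ! length xs = ?p" and "length xs < length (pre t)"
    by (subst dec; simp add: nth_append)+
  then have "length xs = i"
    using nth_eq_iff_index_eq[OF distinct_pre _ i] by simp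
  then show ?thesis
    using that dec con p0 by blast
qed

lemma subtree_end_le:
  assumes "i < length (pre t)"
  shows "i + subtree_size t i \<le> length (pre t)"
proof -
  obtain xs ys where dec: "pre t = xs @ map ((@) (pre t ! i)) (pre (subtree_at t (pre t ! i))) @ ys"
    and len: "length xs = i"
    using pre_split_nth[OF assms] .
  show ?thesis
    using arg_cong[OF dec, of length] len by (simp add: subtree_size_def)
qed

lemma pre_nth_add:
  assumes "i < length (pre t)" and "q < subtree_size t i"
  shows "pre t ! (i + q) = pre t ! i @ pre (subtree_at t (pre t ! i)) ! q"
proof -
  obtain xs ys where dec: "pre t = xs @ map ((@) (pre t ! i)) (pre (subtree_at t (pre t ! i))) @ ys"
    and len: "length xs = i"
    using pre_split_nth[OF assms(1)] .
  show ?thesis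
    using assms(2) len arg_cong[OF dec, of "\<lambda>xs. xs ! (i + q)"] by (simp add: subtree_size_def nth_append)
qed

lemma subtree_nodes_nth_iff:
  assumes i: "i < length (pre t)" and j: "j < length (pre t)"
  shows "pre t ! j \<in> subtree_nodes t (pre t ! i) \<longleftrightarrow> i \<le> j \<and> j < i + subtree_size t i"
proof
  assume "pre t ! j \<in> subtree_nodes t (pre t ! i)"
  then obtain w where w: "pre t ! j = pre t ! i @ w"
    unfolding subtree_nodes_def by blast
  then have "w \<in> set (pre (subtree_at t (pre t ! i)))"
    using append_mem_pre_iff[of "pre t ! i" t w] i j by (metis nth_mem)
  then obtain q where q: "q < subtree_size t i" and wq: "w = pre (subtree_at t (pre t ! i)) ! q"
    unfolding subtree_size_def by (metis in_set_conv_nth)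
  have "pre t ! j = pre t ! (i + q)"
    using pre_nth_add[OF i q] w wq by simp
  moreover have "i + q < length (pre t)"
    using subtree_end_le[OF i] q by simp
  ultimately have "j = i + q"
    using nth_eq_iff_index_eq[OF distinct_pre j] by simp
  then show "i \<le> j \<and> j < i + subtree_size t i"
    using q by simp
next
  assume ij: "i \<le> j \<and> j < i + subtree_size t i"
  then have "pre t ! j = pre t ! i @ pre (subtree_at t (pre t ! i)) ! (j - i)"
    using pre_nth_add[OF i, of "j - i"] by (simp add: less_diff_conv2)
  moreover have "pre t ! j \<in> set (pre t)"
    using j by simp
  ultimately show "pre t ! j \<in> subtree_nodes t (pre t ! i)"
    unfolding subtree_nodes_def nodes_def by blast
qed

lemma subtree_end_mono:
  assumes i: "i < length (pre t)" and k: "i \<le> k" "k < i + subtree_size t i"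
  shows "k + subtree_size t k \<le> i + subtree_size t i"
proof -
  have kN: "k < length (pre t)"
    using subtree_end_le[OF i] k by simp
  define j where "j = k + subtree_size t k - 1"
  have jN: "j < length (pre t)" and kj: "k \<le> j" "j < k + subtree_size t k"
    using subtree_end_le[OF kN] subtree_size_pos[of t k] by (auto simp: j_def)
  obtain w where w: "pre t ! j = pre t ! k @ w"
    using subtree_nodes_nth_iff[OF kN jN] kj unfolding subtree_nodes_def by blast
  obtain w' where w': "pre t ! k = pre t ! i @ w'"
    using subtree_nodes_nth_iff[OF i kN] k unfolding subtree_nodes_def by blast
  have "pre t ! j \<in> set (pre t)"
    using jN by simp
  then have "pre t ! j \<in> subtree_nodes t (pre t ! i)"
    using w w' by (auto simp: subtree_nodes_def nodes_def)
  then have "j < i + subtree_size t i"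
    using subtree_nodes_nth_iff[OF i jN] by blast
  then show ?thesis
    by (simp add: j_def)
qed

lemma ell_contour:
  assumes "0 < i" and "i < length (pre t)"
  shows "ell (contour t) i = 2 * (subtree_size t i - 1)"
proof -
  let ?s = "subtree_at t (pre t ! i)"
  obtain a b where ab: "contour t = a @ U # contour ?s @ D # b" and "cnt U a + 1 = i"
    using pre_split_nth[OF assms(2)] assms(1) by blast
  then have "upos (contour t) i = length a"
    by (simp add: upos_append)
  then have "ell (contour t) i = length (contour ?s)"
    by (rule ell_eqI) (simp_all add: ab balanced_contour nth_append)
  also have "\<dots> = 2 * (subtree_size t i - 1)"
    using length_pre[of ?s] cnt_U_plus_cnt_D[of "contour ?s"] balanced_contour[of ?s]
    by (simp add: subtree_size_def balanced_def)
  finally show ?thesis .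
qed

lemma dyck_contour: "length (pre t) = Suc n \<Longrightarrow> dyck n (contour t)"
  using balanced_contour[of t] length_pre[of t] by (simp add: dyck_iff_balanced)

section \<open>Words made of blocks u d^k\<close>

definition blocks :: "nat list \<Rightarrow> step list" where
  "blocks ds = concat (map (\<lambda>d. U # replicate d D) ds)"

lemma blocks_Nil [simp]: "blocks [] = []"
  by (simp add: blocks_def)

lemma blocks_Cons [simp]: "blocks (d # ds) = U # replicate d D @ blocks ds"
  by (simp add: blocks_def)

lemma blocks_append [simp]: "blocks (ds @ es) = blocks ds @ blocks es"
  by (simp add: blocks_def)

lemma cnt_U_blocks [simp]: "cnt U (blocks ds) = length ds"
  by (induction ds) auto

lemma cnt_D_blocks [simp]: "cnt D (blocks ds) = sum_list ds"
  by (induction ds) auto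

lemma blocks_prefix_condition:
  assumes "\<forall>m\<le>length ds. sum_list (take m ds) \<le> m"
  shows "\<forall>r\<le>length (blocks ds). cnt D (take r (blocks ds)) \<le> cnt U (take r (blocks ds))"
  using assms
proof (induction ds rule: rev_induct)
  case (snoc d ds)
  have "\<forall>m\<le>length ds. sum_list (take m ds) \<le> m"
  proof (intro allI impI)
    fix m assume "m \<le> length ds"
    then show "sum_list (take m ds) \<le> m"
      using snoc.prems[rule_format, of m] by simp
  qed
  then have IH: "cnt D (take r (blocks ds)) \<le> cnt U (take r (blocks ds))" if "r \<le> length (blocks ds)" for r
    using snoc.IH that by blast
  have last: "sum_list ds + d \<le> Suc (length ds)"
    using snoc.prems[rule_format, of "Suc (length ds)"] by simp
  show ?case
  proof (intro allI impI)
    fix r assume r: "r \<le> length (blocks (ds @ [d]))"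
    show "cnt D (take r (blocks (ds @ [d]))) \<le> cnt U (take r (blocks (ds @ [d])))"
    proof (cases "r \<le> length (blocks ds)")
      case True
      then show ?thesis
        using IH by simp
    next
      case False
      then obtain s where "r - length (blocks ds) = Suc s"
        by (cases "r - length (blocks ds)") auto
      then have "take r (blocks (ds @ [d])) = blocks ds @ U # take s (replicate d D)"
        using False by simp
      then show ?thesis
        using last by simp
    qed
  qed
qed simp

lemma dyck_blocks:
  assumes "\<forall>m\<le>length ds. sum_list (take m ds) \<le> m" and "sum_list ds = length ds"
  shows "dyck (length ds) (blocks ds)"
  using blocks_prefix_condition[OF assms(1)] assms(2) by (simp add: dyck_def)

lemma ell_blocks_le:
  assumes "length bs < d + sum_list bs"
  shows "ell (blocks (as @ d # bs @ cs)) (length as + 1) \<le> 2 * length bs"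
proof -
  let ?w = "blocks (as @ d # bs @ cs)"
  let ?T = "d + length (blocks bs)"
  have w: "?w = blocks as @ U # (replicate d D @ blocks bs @ blocks cs)"
    by simp
  have up: "upos ?w (length as + 1) = length (blocks as)"
    unfolding w by (rule upos_append) simp
  have "take ?T (drop (length (blocks as) + 1) ?w) = replicate d D @ blocks bs"
    by (simp add: w)
  then show ?thesis
    using ell_le_first_excess[OF up, of ?T] assms by (simp add: w)
qed

definition fiber_word :: "(nat \<Rightarrow> nat) \<Rightarrow> nat \<Rightarrow> step list" where
  "fiber_word c n = blocks (map (\<lambda>j. card {k\<in>{1..n}. c k = j}) [1..<n+1])"

lemma sum_list_fiber_cards:
  assumes "finite K"
  shows "(\<Sum>j\<leftarrow>[a..<b]. card {k\<in>K. c k = j}) = card {k\<in>K. c k \<in> {a..<b}}"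
proof -
  have "{k\<in>K. c k \<in> {a..<b}} = (\<Union>j\<in>{a..<b}. {k\<in>K. c k = j})"
    by auto
  also have "card \<dots> = (\<Sum>j\<in>{a..<b}. card {k\<in>K. c k = j})"
    using assms by (intro card_UN_disjoint) auto
  finally show ?thesis
    by (simp add: interv_sum_list_conv_sum_set_nat)
qed

lemma dyck_fiber_word:
  assumes c: "\<forall>k\<in>{1..n}. k \<le> c k \<and> c k \<le> n"
  shows "dyck n (fiber_word c n)"
proof -
  let ?ds = "map (\<lambda>j. card {k\<in>{1..n}. c k = j}) [1..<n+1]"
  have "sum_list (take m ?ds) \<le> m" if "m \<le> length ?ds" for m
  proof -
    have "sum_list (take m ?ds) = card {k\<in>{1..n}. c k \<in> {1..<m+1}}"
      using that sum_list_fiber_cards[of "{1..n}" c 1 "m + 1"] by (simp add: take_map take_upt del: upt_Suc)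
    also have "\<dots> \<le> card {1..m}"
    proof (intro card_mono subsetI)
      fix k assume k: "k \<in> {k\<in>{1..n}. c k \<in> {1..<m+1}}"
      then have "k \<le> c k"
        using c by blast
      then show "k \<in> {1..m}"
        using k by simp
    qed simp
    finally show ?thesis
      by simp
  qed
  moreover have "sum_list ?ds = n"
  proof -
    have "{k\<in>{1..n}. c k \<in> {1..<n+1}} = {1..n}"
      using c by fastforce
    then show ?thesis
      using sum_list_fiber_cards[of "{1..n}" c 1 "n + 1"] by (simp del: upt_Suc)
  qed
  ultimately show ?thesis
    using dyck_blocks[of ?ds] by (simp add: fiber_word_def)
qed

lemma ell_fiber_word_le:
  assumes c: "\<forall>k\<in>{1..n}. k \<le> c k" and i: "1 \<le> i" "i \<le> e" "e \<le> n"
    and closed: "\<forall>k\<in>{i..e}. c k \<le> e"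
  shows "ell (fiber_word c n) i \<le> 2 * (e - i)"
proof -
  define f where "f j = card {k\<in>{1..n}. c k = j}" for j
  have upt_split: "[1..<n+1] = [1..<i] @ i # [Suc i..<Suc e] @ [Suc e..<n+1]"
  proof -
    have "[1..<n+1] = [1..<i] @ [i..<Suc e] @ [Suc e..<n+1]"
      using i upt_add_eq_append[of 1 i "n + 1 - i"] upt_add_eq_append[of i "Suc e" "n - e"]
      by simp
    then show ?thesis
      using i by (simp add: upt_conv_Cons del: upt_Suc)
  qed
  have "e - i < card {i..e}"
    using i by simp
  also have "card {i..e} \<le> card {k\<in>{1..n}. c k \<in> {i..<Suc e}}"
  proof (intro card_mono subsetI)
    fix k assume k: "k \<in> {i..e}"
    then have "k \<le> c k" and "c k \<le> e"
      using c closed i by simp_all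
    then show "k \<in> {k\<in>{1..n}. c k \<in> {i..<Suc e}}"
      using k i by auto
  qed simp
  also have "\<dots> = f i + sum_list (map f [Suc i..<Suc e])"
    using i sum_list_fiber_cards[of "{1..n}" c i "Suc e"]
    by (simp add: f_def[abs_def] upt_conv_Cons del: upt_Suc)
  finally have "ell (blocks (map f [1..<i] @ f i # map f [Suc i..<Suc e] @ map f [Suc e..<n+1]))
      (length (map f [1..<i]) + 1)
      \<le> 2 * length (map f [Suc i..<Suc e])"
    using i by (intro ell_blocks_le) (simp del: upt_Suc)
  then show ?thesis
    using i unfolding fiber_word_def f_def[symmetric] upt_split by (simp del: upt_Suc)
qed

section \<open>Certificates\<close>

lemma ell_fiber_word_le_ell_contour:
  assumes N: "length (pre t) = Suc n" and c: "\<forall>k\<in>{1..n}. k \<le> c k \<and> c k < k + subtree_size t k"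
    and i: "1 \<le> i" "i \<le> n"
  shows "ell (fiber_word c n) i \<le> ell (contour t) i"
proof -
  define e where "e = i + subtree_size t i - 1"
  have iN: "i < length (pre t)"
    using i N by simp
  have e: "i \<le> e" "e \<le> n"
    using subtree_size_pos[of t i] subtree_end_le[OF iN] N by (auto simp: e_def)
  have "c k \<le> e" if k: "k \<in> {i..e}" for k
  proof -
    have "c k < k + subtree_size t k"
      using c k e i by simp
    also have "\<dots> \<le> i + subtree_size t i"
      using subtree_end_mono[OF iN, of k] k subtree_size_pos[of t i] by (auto simp: e_def)
    finally show ?thesis
      by (simp add: e_def)
  qed
  then have "ell (fiber_word c n) i \<le> 2 * (e - i)"
    using c i e by (intro ell_fiber_word_le) auto
  also have "\<dots> = ell (contour t) i"
    using ell_contour[OF _ iN] i by (simp add: e_def)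
  finally show ?thesis .
qed

lemma certificate_in_subtree:
  assumes "\<exists>v\<in>subtree_nodes t u. l v < depth u"
  shows "certificate t l u \<in> subtree_nodes t u"
proof -
  let ?Q = "\<lambda>v. v \<in> subtree_nodes t u \<and> l v < depth u"
  have "filter ?Q (pre t) \<noteq> []"
    using assms by (auto simp: filter_empty_conv subtree_nodes_def nodes_def)
  then have "hd (filter ?Q (pre t)) \<in> set (filter ?Q (pre t))"
    by (rule hd_in_set)
  then show ?thesis
    by (simp add: certificate_def)
qed

lemma certificate_positions:
  assumes cert: "\<forall>u\<in>nodes t. depth u > 0 \<longrightarrow> (\<exists>v\<in>subtree_nodes t u. l v < depth u)"
  obtains c where "\<forall>k\<in>{1..<length (pre t)}.
    pre t ! c k = certificate t l (pre t ! k) \<and> k \<le> c k \<and> c k < k + subtree_size t k"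
proof -
  have "\<exists>j. pre t ! j = certificate t l (pre t ! k) \<and> k \<le> j \<and> j < k + subtree_size t k"
    if k: "k \<in> {1..<length (pre t)}" for k
  proof -
    have kN: "k < length (pre t)"
      using k by simp
    have "pre t ! k \<noteq> []"
      using nth_eq_iff_index_eq[OF distinct_pre kN, of 0] k by auto
    then have "certificate t l (pre t ! k) \<in> subtree_nodes t (pre t ! k)"
      using cert kN by (intro certificate_in_subtree) (simp add: nodes_def depth_def)
    moreover from this obtain j where "j < length (pre t)" "pre t ! j = certificate t l (pre t ! k)"
      by (auto simp: subtree_nodes_def nodes_def in_set_conv_nth)
    ultimately show ?thesis
      using subtree_nodes_nth_iff[OF kN] by metis
  qed
  then show ?thesis
    using that by metis
qed

lemma cert_count_eq_fiber_card:
  assumes N: "length (pre t) = Suc n"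
    and c: "\<forall>k\<in>{1..n}. c k \<le> n \<and> pre t ! c k = certificate t l (pre t ! k)"
    and j: "j \<le> n"
  shows "cert_count t l (pre t ! j) = card {k\<in>{1..n}. c k = j}"
proof -
  have inj: "inj_on (nth (pre t)) {0..n}"
    using N distinct_pre by (intro inj_on_nth) auto
  have nonroot: "pre t ! k \<noteq> [] \<longleftrightarrow> k \<noteq> 0" if "k \<le> n" for k
    using inj_onD[OF inj, of k 0] that by (cases "k = 0") auto
  have "{u \<in> nodes t. u \<noteq> [] \<and> certificate t l u = pre t ! j} = nth (pre t) ` {k\<in>{1..n}. c k = j}"
  proof (intro set_eqI iffI)
    fix u assume u: "u \<in> {u \<in> nodes t. u \<noteq> [] \<and> certificate t l u = pre t ! j}"
    then obtain k where k: "k \<le> n" "u = pre t ! k"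
      using N by (auto simp: nodes_def in_set_conv_nth less_Suc_eq_le)
    then have "k \<in> {1..n}"
      using u nonroot by auto
    then have "c k = j"
      using c u k j inj_onD[OF inj, of "c k" j] by auto
    with k \<open>k \<in> {1..n}\<close> show "u \<in> nth (pre t) ` {k\<in>{1..n}. c k = j}"
      by auto
  next
    fix u assume "u \<in> nth (pre t) ` {k\<in>{1..n}. c k = j}"
    then show "u \<in> {u \<in> nodes t. u \<noteq> [] \<and> certificate t l u = pre t ! j}"
      using c nonroot N by (auto simp: nodes_def)
  qed
  moreover have "inj_on (nth (pre t)) {k\<in>{1..n}. c k = j}"
    using inj by (rule inj_on_subset) auto
  ultimately show ?thesis
    by (simp add: cert_count_def card_image)
qed

lemma dword_eq_fiber_word:
  assumes N: "length (pre t) = Suc n"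
    and c: "\<forall>k\<in>{1..n}. c k \<le> n \<and> pre t ! c k = certificate t l (pre t ! k)"
  shows "dword t l = fiber_word c n"
proof -
  have tl_pre: "tl (pre t) = map (nth (pre t)) [1..<n+1]"
    by (rule nth_equalityI) (simp_all add: N nth_tl del: upt_Suc)
  have "dword t l = blocks (map (\<lambda>j. cert_count t l (pre t ! j)) [1..<n+1])"
    unfolding dword_def blocks_def tl_pre by (simp add: o_def del: upt_Suc)
  also have "\<dots> = fiber_word c n"
    unfolding fiber_word_def using cert_count_eq_fiber_card[OF N c]
    by (intro arg_cong[of _ _ blocks] map_cong) auto
  finally show ?thesis .
qed

theorem proposition4p1:
  fixes S :: ptree and l :: "nat list \<Rightarrow> nat" and n :: nat
  assumes "sticky S l" and "card (nodes S) = n + 1" and "n \<ge> 1"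
  shows "dyck n (dword S l) \<and> dyck n (contour S) \<and> tamari_le n (dword S l) (contour S)"
proof -
  have N: "length (pre S) = Suc n"
    using assms(2) distinct_card[OF distinct_pre] by (simp add: nodes_def)
  obtain c where c: "\<forall>k\<in>{1..<Suc n}.
      pre S ! c k = certificate S l (pre S ! k) \<and> k \<le> c k \<and> c k < k + subtree_size S k"
    using certificate_positions[of S l] assms(1) N unfolding sticky_def by metis
  have c_le: "c k \<le> n" if k: "k \<in> {1..n}" for k
  proof -
    have "c k < k + subtree_size S k"
      using c k by simp
    also have "\<dots> \<le> Suc n"
      using subtree_end_le[of k S] k N by simp
    finally show ?thesis
      by simp
  qed
  have dword: "dword S l = fiber_word c n"
    using c c_le N by (intro dword_eq_fiber_word) auto
  have "dyck n (dword S l)"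
    unfolding dword using c c_le by (intro dyck_fiber_word) auto
  moreover have "dyck n (contour S)"
    using N by (rule dyck_contour)
  moreover have "tamari_le n (dword S l) (contour S)"
    unfolding tamari_le_def dword using N c by (auto intro: ell_fiber_word_le_ell_contour)
  ultimately show ?thesis
    by blast
qed

end
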